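(* Let $(S,d)$ be a finite metric space partitioned into two disjoint groups $S=S_1\cup S_2$, let $k_1,k_2$ be nonnegative integers with $k=k_1+k_2$, and let $r^*$ be the optimal radius of the fair $k$-center problem. Suppose the points arrive in a stream in which all points of $S_1$ arrive before all points of $S_2$, and let $\Gamma_1',\Gamma_2',\Gamma_{sub}$ be the sets produced by Algorithm B (described in the context) with $\lambda=2r^*$. Then: (1) $|\Gamma_1'|+|\Gamma_2'|\le k$; (2) $|\Gamma_2'|\le k_2$; (3) there exists a subset $\Gamma_1''\subseteq\Gamma_1'$ such that every $c\in\Gamma_1''$ has a replacement $\sigma(c)\in\Gamma_{sub}$ (so $d(c,\sigma(c))\le r^*$), and, with $\Gamma'_{sub}=\{\sigma(c): c\in\Gamma_1''\}\subseteq\Gamma_{sub}$, we have $|((\Gamma_1'\setminus\Gamma_1'')\cup\Gamma'_{sub})\cap S_1|\le k_1$.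
   Context: Fair $k$-center: $C\subseteq S$ is feasible if $|C\cap S_l|\le k_l$ for $l=1,2$; cost $\max_{s\in S}d(s,C)$, $d(s,C)=\min_{c\in C}d(s,c)$, $d(s,\emptyset)=\infty$; $r^*$ is the minimum cost over feasible $C$. Algorithm B (parameter $\lambda=2r^*$): initialize $\Gamma_1'=\Gamma_2'=\Gamma_{sub}=\emptyset$. Upon each arriving $i\in S_1$: if $d(i,\Gamma_1')>\lambda$, add $i$ to $\Gamma_1'$. Upon each arriving $i\in S_2$: if $|\Gamma_1'|\le k_1$, then add $i$ to $\Gamma_2'$ iff $d(i,\Gamma_1')>3\lambda/2$ and $d(i,\Gamma_2')>\lambda$; otherwise ($|\Gamma_1'|>k_1$), add $i$ to $\Gamma_2'$ iff $d(i,\Gamma_1'\cup\Gamma_2')>\lambda$, and, in addition, if there is a point $j\in\Gamma_1'$ that has no replacement yet and satisfies $d(i,j)\le\lambda/2$, add $i$ to $\Gamma_{sub}$ and designate $i$ as the replacement $\sigma(j)$ of such a $j$. Output $\Gamma_1',\Gamma_2',\Gamma_{sub}$. *)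

theory Defs
  imports "HOL-Library.Extended_Real"
begin

text \<open>Distance from a point to a set: d(s,C) = min over C, with d(s,{}) = infinity.\<close>
definition dset :: "('a \<Rightarrow> 'a \<Rightarrow> real) \<Rightarrow> 'a \<Rightarrow> 'a set \<Rightarrow> ereal" where
  "dset d s C = (INF c\<in>C. ereal (d s c))"

definition fk_cost :: "('a \<Rightarrow> 'a \<Rightarrow> real) \<Rightarrow> 'a set \<Rightarrow> 'a set \<Rightarrow> ereal" where
  "fk_cost d S C = (SUP s\<in>S. dset d s C)"

definition fair_feasible :: "'a set \<Rightarrow> 'a set \<Rightarrow> nat \<Rightarrow> nat \<Rightarrow> 'a set \<Rightarrow> bool" where
  "fair_feasible S1 S2 k1 k2 C \<longleftrightarrow>
     C \<subseteq> S1 \<union> S2 \<and> card (C \<inter> S1) \<le> k1 \<and> card (C \<inter> S2) \<le> k2"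

definition fair_opt :: "('a \<Rightarrow> 'a \<Rightarrow> real) \<Rightarrow> 'a set \<Rightarrow> 'a set \<Rightarrow> nat \<Rightarrow> nat \<Rightarrow> ereal" where
  "fair_opt d S1 S2 k1 k2 =
     (INF C\<in>{C. fair_feasible S1 S2 k1 k2 C}. fk_cost d (S1 \<union> S2) C)"

text \<open>State: (Gamma1', Gamma2', Gamma_sub, sigma),
  where sigma j = Some i means i is the designated replacement of j.  The choice of j
  (when several qualify) is left nondeterministic.\<close>
definition stepB :: "('a \<Rightarrow> 'a \<Rightarrow> real) \<Rightarrow> ereal \<Rightarrow> nat \<Rightarrow> 'a set \<Rightarrow> 'a set \<Rightarrow>
    'a set \<times> 'a set \<times> 'a set \<times> ('a \<Rightarrow> 'a option) \<Rightarrow> 'a \<Rightarrow>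
    'a set \<times> 'a set \<times> 'a set \<times> ('a \<Rightarrow> 'a option) \<Rightarrow> bool" where
  "stepB d lam k1 S1 S2 st i st' \<longleftrightarrow>
     (case st of (G1, G2, Gs, \<sigma>) \<Rightarrow> case st' of (G1', G2', Gs', \<sigma>') \<Rightarrow>
       (i \<in> S1 \<and>
          G1' = (if lam < dset d i G1 then insert i G1 else G1) \<and>
          G2' = G2 \<and> Gs' = Gs \<and> \<sigma>' = \<sigma>)
     \<or> (i \<in> S2 \<and> card G1 \<le> k1 \<and> G1' = G1 \<and>
          G2' = (if 3 * lam / 2 < dset d i G1 \<and> lam < dset d i G2 then insert i G2 else G2) \<and>
          Gs' = Gs \<and> \<sigma>' = \<sigma>)
     \<or> (i \<in> S2 \<and> k1 < card G1 \<and> G1' = G1 \<and>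
          G2' = (if lam < dset d i (G1 \<union> G2) then insert i G2 else G2) \<and>
          ((\<exists>j\<in>G1. \<sigma> j = None \<and> ereal (d i j) \<le> lam / 2 \<and>
                Gs' = insert i Gs \<and> \<sigma>' = \<sigma>(j := Some i))
           \<or> ((\<not> (\<exists>j\<in>G1. \<sigma> j = None \<and> ereal (d i j) \<le> lam / 2)) \<and>
                Gs' = Gs \<and> \<sigma>' = \<sigma>))))"

inductive runB :: "('a \<Rightarrow> 'a \<Rightarrow> real) \<Rightarrow> ereal \<Rightarrow> nat \<Rightarrow> 'a set \<Rightarrow> 'a set \<Rightarrow> 'a list \<Rightarrow>
    'a set \<times> 'a set \<times> 'a set \<times> ('a \<Rightarrow> 'a option) \<Rightarrow> bool"
  for d lam k1 S1 S2 where
  init: "runB d lam k1 S1 S2 [] ({}, {}, {}, (\<lambda>_. None))"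
| step: "runB d lam k1 S1 S2 xs st \<Longrightarrow> stepB d lam k1 S1 S2 st x st' \<Longrightarrow>
         runB d lam k1 S1 S2 (xs @ [x]) st'"

end

theory Submission
  imports Defs
begin

(*
  Suppose r* is finite and let C be an optimal fair solution, so that every point lies within
  r* of C. Algorithm B keeps the centers of Gamma1' and Gamma2' pairwise more than 2 r* apart,
  hence sending each of them to a point of C within distance r* is injective; this gives (1).
  While |Gamma1'| <= k1, the centers of Gamma2' are more than 3 r* away from Gamma1', whereas
  every point of S1 is within 2 r* of Gamma1'; so they are sent into C \<inter> S2, which gives (2).
  Once |Gamma1'| > k1, every arriving point of S2 within r* of a center j of Gamma1' replaces j
  unless j already has a replacement; so the centers of Gamma1' left without replacement are
  sent into C \<inter> S1, and (3) holds with Gamma1'' the set of replaced centers.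
  If r* is infinite, the algorithm never opens a center.
*)

lemma ereal_less_dset_iff:
  "finite C \<Longrightarrow> ereal a < dset d s C \<longleftrightarrow> (\<forall>c\<in>C. a < d s c)"
  by (cases "C = {}") (simp_all add: dset_def finite_less_Inf_iff top_ereal_def)

lemma dset_le_ereal_iff:
  "finite C \<Longrightarrow> dset d s C \<le> ereal a \<longleftrightarrow> (\<exists>c\<in>C. d s c \<le> a)"
  by (cases "C = {}") (simp_all add: dset_def cInf_eq_Min Min_le_iff top_ereal_def)

lemma fair_opt_attained:
  assumes "finite (S1 \<union> S2)"
  obtains C
  where "fair_feasible S1 S2 k1 k2 C" "fair_opt d S1 S2 k1 k2 = fk_cost d (S1 \<union> S2) C"
proof -
  let ?F = "{C. fair_feasible S1 S2 k1 k2 C}"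
  have "finite ?F"
    using assms by (auto simp: fair_feasible_def intro: finite_subset[of _ "Pow (S1 \<union> S2)"])
  moreover have "{} \<in> ?F" by (simp add: fair_feasible_def)
  ultimately have "fair_opt d S1 S2 k1 k2 \<in> fk_cost d (S1 \<union> S2) ` ?F"
    unfolding fair_opt_def by (subst cInf_eq_Min) (auto intro: Min_in)
  then show thesis using that by blast
qed

lemma fk_cost_le_ereal_iff:
  "finite C \<Longrightarrow> fk_cost d S C \<le> ereal a \<longleftrightarrow> (\<forall>s\<in>S. \<exists>c\<in>C. d s c \<le> a)"
  by (simp add: fk_cost_def SUP_le_iff dset_le_ereal_iff)

lemma fair_opt_cover:
  assumes "finite (S1 \<union> S2)" "fair_opt d S1 S2 k1 k2 = ereal r"
  obtains C where "fair_feasible S1 S2 k1 k2 C" "\<forall>s\<in>S1 \<union> S2. \<exists>c\<in>C. d s c \<le> r"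
proof -
  obtain C where C: "fair_feasible S1 S2 k1 k2 C"
    and "fair_opt d S1 S2 k1 k2 = fk_cost d (S1 \<union> S2) C"
    using fair_opt_attained[OF assms(1)] .
  have "finite C" using C by (auto simp: fair_feasible_def intro: finite_subset[OF _ assms(1)])
  moreover have "fk_cost d (S1 \<union> S2) C \<le> ereal r"
    using \<open>fair_opt d S1 S2 k1 k2 = fk_cost d (S1 \<union> S2) C\<close> assms(2) by simp
  ultimately show thesis using that[OF C] by (simp add: fk_cost_le_ereal_iff)
qed

lemma runB_Nil: "runB d lam k1 S1 S2 [] st \<Longrightarrow> st = ({}, {}, {}, Map.empty)"
  by (cases rule: runB.cases) auto

lemma runB_infinite_radius:
  "runB d \<infinity> k1 S1 S2 zs st \<Longrightarrow> st = ({}, {}, {}, Map.empty)"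
  by (induction rule: runB.induct) (auto simp: stepB_def dset_def)

lemma stepB_finite_radiusE:
  assumes "stepB d (2 * ereal r) k1 S1 S2 (G1, G2, Gs, \<sigma>) x (G1', G2', Gs', \<sigma>')"
    and "finite G1" "finite G2"
  obtains (group1) "x \<in> S1" "G1' = (if \<forall>g\<in>G1. 2 * r < d x g then insert x G1 else G1)"
      "G2' = G2" "Gs' = Gs" "\<sigma>' = \<sigma>"
  | (group2_within_budget) "x \<in> S2" "card G1 \<le> k1" "G1' = G1"
      "G2' = (if (\<forall>g\<in>G1. 3 * r < d x g) \<and> (\<forall>g\<in>G2. 2 * r < d x g) then insert x G2 else G2)"
      "Gs' = Gs" "\<sigma>' = \<sigma>"
  | (group2_replace) j where "x \<in> S2" "k1 < card G1" "G1' = G1"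
      "G2' = (if \<forall>g\<in>G1 \<union> G2. 2 * r < d x g then insert x G2 else G2)"
      "j \<in> G1" "\<sigma> j = None" "d x j \<le> r" "Gs' = insert x Gs" "\<sigma>' = \<sigma>(j \<mapsto> x)"
  | (group2_keep) "x \<in> S2" "k1 < card G1" "G1' = G1"
      "G2' = (if \<forall>g\<in>G1 \<union> G2. 2 * r < d x g then insert x G2 else G2)"
      "\<forall>j\<in>G1. d x j \<le> r \<longrightarrow> j \<in> dom \<sigma>" "Gs' = Gs" "\<sigma>' = \<sigma>"
proof -
  have radii: "2 * ereal r = ereal (2 * r)" "3 * ereal (2 * r) / 2 = ereal (3 * r)"
    "ereal (2 * r) / 2 = ereal r"
    by simp_all
  have finite_union: "finite (G1 \<union> G2)" using assms(2,3) by simp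
  note dset_iffs = ereal_less_dset_iff[OF assms(2)] ereal_less_dset_iff[OF assms(3)]
    ereal_less_dset_iff[OF finite_union]
  have no_replacement_iff:
    "(\<not> (\<exists>j\<in>G1. \<sigma> j = None \<and> d x j \<le> r)) \<longleftrightarrow> (\<forall>j\<in>G1. d x j \<le> r \<longrightarrow> j \<in> dom \<sigma>)"
    by auto
  from assms(1) show thesis
    unfolding stepB_def radii prod.case ereal_less_eq(3) dset_iffs no_replacement_iff
    by (elim disjE conjE bexE) (fact that)+
qed

lemma set_prefix_subset_if_notin_suffix:
  assumes "zs @ x # rest = xs @ ys" "x \<notin> set ys"
  shows "set zs \<subseteq> set xs"
proof -
  obtain us where "zs = xs @ us \<and> us @ x # rest = ys \<or> zs @ us = xs"
    using assms(1) by (auto simp: append_eq_append_conv2)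
  then show ?thesis using assms(2) by auto
qed

locale semimetric_on =
  fixes S :: "'a set" and d :: "'a \<Rightarrow> 'a \<Rightarrow> real"
  assumes dist_self: "x \<in> S \<Longrightarrow> d x x = 0"
    and dist_commute: "x \<in> S \<Longrightarrow> y \<in> S \<Longrightarrow> d x y = d y x"
    and dist_triangle: "x \<in> S \<Longrightarrow> y \<in> S \<Longrightarrow> z \<in> S \<Longrightarrow> d x z \<le> d x y + d y z"
begin

lemma dist_nonneg: "x \<in> S \<Longrightarrow> y \<in> S \<Longrightarrow> 0 \<le> d x y"
  using dist_triangle[of x y x] dist_self[of x] dist_commute[of x y] by simp

lemma fk_cost_nonneg:
  assumes "S \<noteq> {}" "C \<subseteq> S"
  shows "0 \<le> fk_cost d S C"
proof -
  obtain s where "s \<in> S" using assms(1) by blast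
  then have "0 \<le> dset d s C"
    unfolding dset_def using assms(2) by (auto intro!: INF_greatest dist_nonneg)
  also have "\<dots> \<le> fk_cost d S C"
    unfolding fk_cost_def using \<open>s \<in> S\<close> by (rule SUP_upper)
  finally show ?thesis .
qed

lemma fair_opt_nonneg:
  assumes "S1 \<union> S2 = S" "S \<noteq> {}"
  shows "0 \<le> fair_opt d S1 S2 k1 k2"
  unfolding fair_opt_def fair_feasible_def assms(1)
  by (intro INF_greatest) (auto intro: fk_cost_nonneg[OF assms(2)])

lemma pairwise_dist_insert:
  assumes "pairwise (\<lambda>a b. \<delta> < d a b) A" "A \<subseteq> S" "x \<in> S" "\<And>a. a \<in> A \<Longrightarrow> \<delta> < d x a"
  shows "pairwise (\<lambda>a b. \<delta> < d a b) (insert x A)"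
proof -
  have "\<delta> < d a x" if "a \<in> A" for a
    using assms(2-4) that dist_commute[of a x] by auto
  then show ?thesis using assms(1,4) by (auto simp: pairwise_insert)
qed

lemma separated_close_unique:
  assumes "pairwise (\<lambda>a b. 2 * r < d a b) A" "A \<subseteq> S" "x \<in> S"
    and "a \<in> A" "b \<in> A" "d a x \<le> r" "d b x \<le> r"
  shows "a = b"
proof (rule ccontr)
  assume "a \<noteq> b"
  with assms(1,4,5) have "2 * r < d a b" by (rule pairwiseD)
  moreover have "d a b \<le> d a x + d x b" using assms by (intro dist_triangle) auto
  moreover have "d x b = d b x" using assms by (intro dist_commute) auto
  ultimately show False using assms(6,7) by linarith
qed

lemma card_le_if_separated_cover:
  assumes "finite B" "B \<subseteq> S" "A \<subseteq> S" "pairwise (\<lambda>a b. 2 * r < d a b) A"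
    and "\<And>a. a \<in> A \<Longrightarrow> \<exists>b\<in>B. d a b \<le> r"
  shows "card A \<le> card B"
proof -
  obtain f where f: "\<And>a. a \<in> A \<Longrightarrow> f a \<in> B \<and> d a (f a) \<le> r"
    using assms(5) by metis
  have "inj_on f A"
  proof (rule inj_onI)
    fix a b assume "a \<in> A" "b \<in> A" "f a = f b"
    moreover have "f a \<in> S" using f[OF \<open>a \<in> A\<close>] assms(2) by blast
    ultimately show "a = b"
      using separated_close_unique[OF assms(4,3)] f by metis
  qed
  moreover have "f ` A \<subseteq> B" using f by blast
  ultimately show ?thesis using assms(1) by (rule card_inj_on_le)
qed

end

locale algorithm_B = semimetric_on "S1 \<union> S2" d for S1 S2 :: "'a set" and d +
  fixes k1 :: nat and r :: real
  assumes finite_points: "finite (S1 \<union> S2)"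
    and groups_disjoint: "S1 \<inter> S2 = {}"
    and radius_nonneg: "0 \<le> r"
begin

lemma finite_if_subset_points: "A \<subseteq> S1 \<union> S2 \<Longrightarrow> finite A"
  using finite_points by (rule finite_subset[rotated])

text \<open>\<open>P\<close> is the set of points that have arrived so far.\<close>
definition center_invariant :: "'a set \<Rightarrow> 'a set \<Rightarrow> 'a set \<Rightarrow> bool" where
  "center_invariant P G1 G2 \<longleftrightarrow>
     G1 \<subseteq> S1 \<inter> P \<and> G2 \<subseteq> S2 \<inter> P \<and> pairwise (\<lambda>a b. 2 * r < d a b) (G1 \<union> G2) \<and>
     (\<forall>s\<in>S1 \<inter> P. \<exists>g\<in>G1. d s g \<le> 2 * r) \<and>
     (card G1 \<le> k1 \<longrightarrow> (\<forall>g\<in>G2. \<forall>a\<in>G1. 3 * r < d g a))"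

definition replacement_invariant :: "'a set \<Rightarrow> 'a set \<Rightarrow> 'a set \<Rightarrow> ('a \<Rightarrow> 'a option) \<Rightarrow> bool" where
  "replacement_invariant P G1 Gs \<sigma> \<longleftrightarrow>
     Gs \<subseteq> S2 \<inter> P \<and> (\<forall>c i. \<sigma> c = Some i \<longrightarrow> c \<in> G1 \<and> i \<in> Gs \<and> d c i \<le> r) \<and>
     (k1 < card G1 \<longrightarrow> (\<forall>i\<in>S2 \<inter> P. \<forall>j\<in>G1. d i j \<le> r \<longrightarrow> j \<in> dom \<sigma>))"

lemma center_invariant_group1_step:
  assumes inv: "center_invariant P G1 G2" and x: "x \<in> S1" and "P \<inter> S2 = {}"
  shows "center_invariant (insert x P) (if \<forall>g\<in>G1. 2 * r < d x g then insert x G1 else G1) G2"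
proof -
  have G1: "G1 \<subseteq> S1 \<inter> P" "pairwise (\<lambda>a b. 2 * r < d a b) G1"
    and cover: "\<forall>s\<in>S1 \<inter> P. \<exists>g\<in>G1. d s g \<le> 2 * r"
    using inv by (auto simp: center_invariant_def intro: pairwise_subset[of _ "G1 \<union> G2"])
  have "G2 = {}" using inv \<open>P \<inter> S2 = {}\<close> by (auto simp: center_invariant_def)
  show ?thesis
  proof (cases "\<forall>g\<in>G1. 2 * r < d x g")
    case True
    have "pairwise (\<lambda>a b. 2 * r < d a b) (insert x G1)"
      using G1 x True by (intro pairwise_dist_insert) auto
    moreover have "d x x \<le> 2 * r" using x dist_self radius_nonneg by simp
    ultimately show ?thesis
      using G1(1) cover x True \<open>G2 = {}\<close> unfolding center_invariant_def by auto
  next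
    case False
    then have "\<exists>g\<in>G1. d x g \<le> 2 * r" by (auto simp: not_less)
    then show ?thesis
      using G1 cover \<open>G2 = {}\<close> False unfolding center_invariant_def by auto
  qed
qed

lemma center_invariant_insert_point:
  assumes "center_invariant P G1 G2" "x \<notin> S1"
  shows "center_invariant (insert x P) G1 G2"
proof -
  have "S1 \<inter> insert x P = S1 \<inter> P" using assms(2) by blast
  then show ?thesis using assms(1) unfolding center_invariant_def by blast
qed

lemma center_invariant_insert_group2_center:
  assumes inv: "center_invariant P G1 G2" and x: "x \<in> S2"
    and far: "\<forall>g\<in>G1 \<union> G2. 2 * r < d x g"
    and far_G1: "card G1 \<le> k1 \<Longrightarrow> \<forall>a\<in>G1. 3 * r < d x a"
  shows "center_invariant (insert x P) G1 (insert x G2)"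
proof -
  have "pairwise (\<lambda>a b. 2 * r < d a b) (insert x (G1 \<union> G2))"
    using inv x far by (intro pairwise_dist_insert) (auto simp: center_invariant_def)
  moreover have "center_invariant (insert x P) G1 G2"
    using inv x groups_disjoint by (intro center_invariant_insert_point) auto
  ultimately show ?thesis using x far_G1 unfolding center_invariant_def by auto
qed

lemma center_invariant_within_budget_step:
  assumes inv: "center_invariant P G1 G2" and x: "x \<in> S2" and "card G1 \<le> k1"
  shows "center_invariant (insert x P) G1
    (if (\<forall>g\<in>G1. 3 * r < d x g) \<and> (\<forall>g\<in>G2. 2 * r < d x g) then insert x G2 else G2)"
proof (cases "(\<forall>g\<in>G1. 3 * r < d x g) \<and> (\<forall>g\<in>G2. 2 * r < d x g)")
  case True
  then have "\<forall>g\<in>G1 \<union> G2. 2 * r < d x g" using radius_nonneg by force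
  then show ?thesis using inv x True by (simp add: center_invariant_insert_group2_center)
next
  case False
  have "x \<notin> S1" using x groups_disjoint by blast
  with inv show ?thesis unfolding if_not_P[OF False] by (rule center_invariant_insert_point)
qed

lemma center_invariant_overflow_step:
  assumes inv: "center_invariant P G1 G2" and x: "x \<in> S2" and "k1 < card G1"
  shows "center_invariant (insert x P) G1
    (if \<forall>g\<in>G1 \<union> G2. 2 * r < d x g then insert x G2 else G2)"
proof -
  have "x \<notin> S1" using x groups_disjoint by blast
  with assms show ?thesis
    by (simp add: center_invariant_insert_group2_center center_invariant_insert_point)
qed

lemma replacement_invariant_group1_step:
  assumes inv: "replacement_invariant P G1 Gs \<sigma>" and "x \<in> S1" "P \<inter> S2 = {}"
  shows "replacement_invariant (insert x P) G1' Gs \<sigma>"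
proof -
  have "S2 \<inter> insert x P = {}" using assms(2,3) groups_disjoint by blast
  moreover have "Gs = {}" using inv \<open>P \<inter> S2 = {}\<close> unfolding replacement_invariant_def by blast
  moreover have "\<sigma> c = None" for c
    using inv \<open>Gs = {}\<close> unfolding replacement_invariant_def by (cases "\<sigma> c") auto
  ultimately show ?thesis unfolding replacement_invariant_def by simp
qed

lemma replacement_invariant_keep_step:
  assumes inv: "replacement_invariant P G1 Gs \<sigma>" and "x \<in> S2"
    and "k1 < card G1 \<Longrightarrow> \<forall>j\<in>G1. d x j \<le> r \<longrightarrow> j \<in> dom \<sigma>"
  shows "replacement_invariant (insert x P) G1 Gs \<sigma>"
proof -
  have "S2 \<inter> insert x P = insert x (S2 \<inter> P)" using \<open>x \<in> S2\<close> by blast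
  with assms show ?thesis unfolding replacement_invariant_def by blast
qed

lemma replacement_invariant_replace_step:
  assumes inv: "replacement_invariant P G1 Gs \<sigma>" and center: "center_invariant P G1 G2"
    and x: "x \<in> S2" and j: "j \<in> G1" "\<sigma> j = None" "d x j \<le> r"
  shows "replacement_invariant (insert x P) G1 (insert x Gs) (\<sigma>(j \<mapsto> x))"
proof -
  have G1: "G1 \<subseteq> S1 \<union> S2" "pairwise (\<lambda>a b. 2 * r < d a b) G1"
    using center by (auto simp: center_invariant_def intro: pairwise_subset[of _ "G1 \<union> G2"])
  have "d j x \<le> r" using j x G1(1) dist_commute[of j x] by auto
  have close_x: "j' = j" if "j' \<in> G1" "d x j' \<le> r" for j'
  proof -
    have "d j' x \<le> r" using that x G1(1) dist_commute[of j' x] by auto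
    then show ?thesis
      using separated_close_unique[OF G1(2,1)] x that(1) j(1) \<open>d j x \<le> r\<close> by blast
  qed
  have "insert x Gs \<subseteq> S2 \<inter> insert x P" using inv x unfolding replacement_invariant_def by blast
  moreover have "\<forall>c i. (\<sigma>(j \<mapsto> x)) c = Some i \<longrightarrow> c \<in> G1 \<and> i \<in> insert x Gs \<and> d c i \<le> r"
    using inv j(1) \<open>d j x \<le> r\<close> unfolding replacement_invariant_def by auto
  moreover have "k1 < card G1 \<longrightarrow>
      (\<forall>i\<in>S2 \<inter> insert x P. \<forall>j'\<in>G1. d i j' \<le> r \<longrightarrow> j' \<in> insert j (dom \<sigma>))"
    using inv close_x unfolding replacement_invariant_def by blast
  ultimately show ?thesis
    by (simp only: replacement_invariant_def dom_fun_upd option.distinct if_False)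
qed

lemma runB_invariants:
  assumes "runB d (2 * ereal r) k1 S1 S2 zs (G1, G2, Gs, \<sigma>)"
    and "zs @ rest = xs @ ys" "set xs \<subseteq> S1" "set ys \<subseteq> S2"
  shows "center_invariant (set zs) G1 G2 \<and> replacement_invariant (set zs) G1 Gs \<sigma>"
  using assms(1,2)
proof (induction zs "(G1, G2, Gs, \<sigma>)" arbitrary: G1 G2 Gs \<sigma> rest rule: runB.induct)
  case init
  then show ?case by (simp add: center_invariant_def replacement_invariant_def)
next
  case (step zs st x)
  obtain G1\<^sub>0 G2\<^sub>0 Gs\<^sub>0 \<sigma>\<^sub>0 where st: "st = (G1\<^sub>0, G2\<^sub>0, Gs\<^sub>0, \<sigma>\<^sub>0)"
    by (cases st)
  have prefix: "zs @ x # rest = xs @ ys" using step.prems by simp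
  have center: "center_invariant (set zs) G1\<^sub>0 G2\<^sub>0"
    and replacement: "replacement_invariant (set zs) G1\<^sub>0 Gs\<^sub>0 \<sigma>\<^sub>0"
    using step.hyps(2)[OF st prefix] by auto
  have finite: "finite G1\<^sub>0" "finite G2\<^sub>0"
    using center unfolding center_invariant_def by (auto intro: finite_if_subset_points)
  have group1_first: "set zs \<inter> S2 = {}" if "x \<in> S1"
  proof -
    have "x \<notin> set ys" using that assms(4) groups_disjoint by blast
    then have "set zs \<subseteq> S1" using set_prefix_subset_if_notin_suffix[OF prefix] assms(3) by blast
    then show ?thesis using groups_disjoint by blast
  qed
  from step.hyps(3)[unfolded st] finite show ?case
  proof (cases rule: stepB_finite_radiusE)
    case group1
    with center replacement group1_first show ?thesis
      by (simp add: center_invariant_group1_step replacement_invariant_group1_step)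
  next
    case group2_within_budget
    with center replacement show ?thesis
      by (simp add: center_invariant_within_budget_step replacement_invariant_keep_step)
  next
    case (group2_replace j)
    with center replacement show ?thesis
      by (simp add: center_invariant_overflow_step replacement_invariant_replace_step)
  next
    case group2_keep
    with center replacement show ?thesis
      by (simp add: center_invariant_overflow_step replacement_invariant_keep_step)
  qed
qed

context
  fixes C :: "'a set" and k2 :: nat
  assumes C_feasible: "fair_feasible S1 S2 k1 k2 C"
    and C_covers: "\<forall>s\<in>S1 \<union> S2. \<exists>c\<in>C. d s c \<le> r"
begin

lemma C_subset: "C \<subseteq> S1 \<union> S2"
  using C_feasible by (simp add: fair_feasible_def)

lemma finite_C: "finite C"
  using C_subset by (rule finite_if_subset_points)

lemma card_centers_le:
  assumes "center_invariant (S1 \<union> S2) G1 G2"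
  shows "card G1 + card G2 \<le> k1 + k2"
proof -
  have G: "G1 \<subseteq> S1" "G2 \<subseteq> S2" "pairwise (\<lambda>a b. 2 * r < d a b) (G1 \<union> G2)"
    using assms by (auto simp: center_invariant_def)
  have "card G1 + card G2 = card (G1 \<union> G2)"
    using G(1,2) groups_disjoint
    by (intro card_Un_disjoint[symmetric]) (auto intro: finite_if_subset_points)
  also have "\<dots> \<le> card C"
    using G C_covers finite_C C_subset by (intro card_le_if_separated_cover) auto
  also have "\<dots> = card ((C \<inter> S1) \<union> (C \<inter> S2))"
    using C_subset by (simp add: Int_absorb2 flip: Int_Un_distrib)
  also have "\<dots> = card (C \<inter> S1) + card (C \<inter> S2)"
    using finite_C groups_disjoint by (intro card_Un_disjoint) auto
  also have "\<dots> \<le> k1 + k2" using C_feasible by (simp add: fair_feasible_def)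
  finally show ?thesis .
qed

lemma card_group2_centers_le:
  assumes inv: "center_invariant (S1 \<union> S2) G1 G2"
  shows "card G2 \<le> k2"
proof (cases "card G1 \<le> k1")
  case True
  have near_C2: "\<exists>c\<in>C \<inter> S2. d g c \<le> r" if "g \<in> G2" for g
  proof -
    have "g \<in> S1 \<union> S2" using that inv by (auto simp: center_invariant_def)
    then obtain c where c: "c \<in> C" "d g c \<le> r" using C_covers by blast
    have "c \<notin> S1"
    proof
      assume "c \<in> S1"
      then obtain a where a: "a \<in> G1" "d c a \<le> 2 * r"
        using inv by (auto simp: center_invariant_def)
      have "d g a \<le> d g c + d c a"
        using that a c inv C_subset by (intro dist_triangle) (auto simp: center_invariant_def)
      moreover have "3 * r < d g a" using inv True that a by (auto simp: center_invariant_def)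
      ultimately show False using a c by linarith
    qed
    then show ?thesis using c C_subset by blast
  qed
  have "card G2 \<le> card (C \<inter> S2)"
    using inv finite_C C_subset near_C2
    by (intro card_le_if_separated_cover)
      (auto simp: center_invariant_def intro: pairwise_subset[of _ "G1 \<union> G2"])
  then show ?thesis using C_feasible by (simp add: fair_feasible_def)
next
  case False
  then show ?thesis using card_centers_le[OF inv] by linarith
qed

lemma card_unreplaced_le:
  assumes center: "center_invariant (S1 \<union> S2) G1 G2"
    and replacement: "replacement_invariant (S1 \<union> S2) G1 Gs \<sigma>"
  shows "card (G1 - dom \<sigma>) \<le> k1"
proof (cases "card G1 \<le> k1")
  case True
  have "finite G1" using center by (auto simp: center_invariant_def intro: finite_if_subset_points)
  then have "card (G1 - dom \<sigma>) \<le> card G1" by (intro card_mono) auto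
  with True show ?thesis by linarith
next
  case False
  have near_C1: "\<exists>c\<in>C \<inter> S1. d j c \<le> r" if "j \<in> G1 - dom \<sigma>" for j
  proof -
    have j: "j \<in> S1" using that center by (auto simp: center_invariant_def)
    obtain c where c: "c \<in> C" "d j c \<le> r" using C_covers j by blast
    have "c \<notin> S2"
    proof
      assume "c \<in> S2"
      moreover have "d c j \<le> r" using c j C_subset dist_commute[of c j] by auto
      ultimately have "j \<in> dom \<sigma>"
        using replacement \<open>\<not> card G1 \<le> k1\<close> that c C_subset
        unfolding replacement_invariant_def not_le by blast
      then show False using that by blast
    qed
    then show ?thesis using c C_subset by blast
  qed
  have "card (G1 - dom \<sigma>) \<le> card (C \<inter> S1)"
    using center finite_C C_subset near_C1
    by (intro card_le_if_separated_cover)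
      (auto simp: center_invariant_def intro: pairwise_subset[of _ "G1 \<union> G2"])
  then show ?thesis using C_feasible by (simp add: fair_feasible_def)
qed

lemma runB_guarantees:
  assumes run: "runB d (2 * ereal r) k1 S1 S2 (xs @ ys) (G1, G2, Gs, \<sigma>)"
    and stream: "set xs = S1" "set ys = S2"
  shows "card G1 + card G2 \<le> k1 + k2 \<and> card G2 \<le> k2 \<and>
    (\<exists>G1''\<subseteq>G1.
       (\<forall>c\<in>G1''. \<sigma> c \<noteq> None \<and> the (\<sigma> c) \<in> Gs \<and> ereal (d c (the (\<sigma> c))) \<le> ereal r) \<and>
       card (((G1 - G1'') \<union> (\<lambda>c. the (\<sigma> c)) ` G1'') \<inter> S1) \<le> k1)"
proof -
  have "set (xs @ ys) = S1 \<union> S2" using stream by simp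
  then have center: "center_invariant (S1 \<union> S2) G1 G2"
    and replacement: "replacement_invariant (S1 \<union> S2) G1 Gs \<sigma>"
    using runB_invariants[OF run, of "[]"] stream by auto
  have replaced: "\<sigma> c \<noteq> None \<and> the (\<sigma> c) \<in> Gs \<and> d c (the (\<sigma> c)) \<le> r"
    if "c \<in> G1 \<inter> dom \<sigma>" for c
    using replacement that unfolding replacement_invariant_def by auto
  have "(\<lambda>c. the (\<sigma> c)) ` (G1 \<inter> dom \<sigma>) \<subseteq> S2"
    using replaced replacement unfolding replacement_invariant_def by blast
  then have "((G1 - G1 \<inter> dom \<sigma>) \<union> (\<lambda>c. the (\<sigma> c)) ` (G1 \<inter> dom \<sigma>)) \<inter> S1 = G1 - dom \<sigma>"
    using center groups_disjoint unfolding center_invariant_def by blast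
  then have "card (((G1 - G1 \<inter> dom \<sigma>) \<union> (\<lambda>c. the (\<sigma> c)) ` (G1 \<inter> dom \<sigma>)) \<inter> S1) \<le> k1"
    using card_unreplaced_le[OF center replacement] by simp
  show ?thesis
  proof (intro conjI exI[of _ "G1 \<inter> dom \<sigma>"])
    show "card G1 + card G2 \<le> k1 + k2" using center by (rule card_centers_le)
    show "card G2 \<le> k2" using center by (rule card_group2_centers_le)
    show "G1 \<inter> dom \<sigma> \<subseteq> G1" by blast
    show "\<forall>c\<in>G1 \<inter> dom \<sigma>.
        \<sigma> c \<noteq> None \<and> the (\<sigma> c) \<in> Gs \<and> ereal (d c (the (\<sigma> c))) \<le> ereal r"
      using replaced by simp
  qed fact
qed

end

end

theorem lemma5:
  fixes d :: "'a \<Rightarrow> 'a \<Rightarrow> real" and S1 S2 :: "'a set" and k1 k2 :: nat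
    and xs ys :: "'a list" and G1 G2 Gs :: "'a set" and \<sigma> :: "'a \<Rightarrow> 'a option"
  assumes fin: "finite (S1 \<union> S2)"
    and disj: "S1 \<inter> S2 = {}"
    and d_zero: "\<And>x y. x \<in> S1 \<union> S2 \<Longrightarrow> y \<in> S1 \<union> S2 \<Longrightarrow> d x y = 0 \<longleftrightarrow> x = y"
    and d_sym: "\<And>x y. x \<in> S1 \<union> S2 \<Longrightarrow> y \<in> S1 \<union> S2 \<Longrightarrow> d x y = d y x"
    and d_tri: "\<And>x y z. x \<in> S1 \<union> S2 \<Longrightarrow> y \<in> S1 \<union> S2 \<Longrightarrow> z \<in> S1 \<union> S2 \<Longrightarrow>
                  d x z \<le> d x y + d y z"
    and stream: "distinct (xs @ ys)" "set xs = S1" "set ys = S2"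
    and run: "runB d (2 * fair_opt d S1 S2 k1 k2) k1 S1 S2 (xs @ ys) (G1, G2, Gs, \<sigma>)"
  shows "card G1 + card G2 \<le> k1 + k2 \<and> card G2 \<le> k2 \<and>
    (\<exists>G1''\<subseteq>G1.
       (\<forall>c\<in>G1''. \<sigma> c \<noteq> None \<and> the (\<sigma> c) \<in> Gs \<and>
                  ereal (d c (the (\<sigma> c))) \<le> fair_opt d S1 S2 k1 k2) \<and>
       card (((G1 - G1'') \<union> (\<lambda>c. the (\<sigma> c)) ` G1'') \<inter> S1) \<le> k1)"
proof (cases "(G1, G2, Gs, \<sigma>) = ({}, {}, {}, Map.empty)")
  case True
  then show ?thesis by simp
next
  case not_initial: False
  interpret semimetric_on "S1 \<union> S2" d
    using d_zero d_sym d_tri by unfold_locales auto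
  let ?r = "fair_opt d S1 S2 k1 k2"
  have "S1 \<union> S2 \<noteq> {}"
  proof
    assume "S1 \<union> S2 = {}"
    then have "runB d (2 * ?r) k1 S1 S2 [] (G1, G2, Gs, \<sigma>)" using run stream by simp
    then show False using not_initial by (blast dest: runB_Nil)
  qed
  then have "0 \<le> ?r" by (intro fair_opt_nonneg) auto
  moreover have "?r \<noteq> \<infinity>"
  proof
    assume "?r = \<infinity>"
    then have "runB d \<infinity> k1 S1 S2 (xs @ ys) (G1, G2, Gs, \<sigma>)" using run by simp
    then show False using not_initial by (blast dest: runB_infinite_radius)
  qed
  ultimately obtain r where r: "?r = ereal r" "0 \<le> r" by (cases ?r) auto
  then obtain C where C: "fair_feasible S1 S2 k1 k2 C" "\<forall>s\<in>S1 \<union> S2. \<exists>c\<in>C. d s c \<le> r"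
    using fair_opt_cover[OF fin] by blast
  interpret algorithm_B S1 S2 d k1 r
    using fin disj r(2) by unfold_locales
  show ?thesis
    unfolding r(1) using run[unfolded r(1)] stream(2,3) by (rule runB_guarantees[OF C])
qed

end
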